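(* Let $\pi$ be a finitely refining sequence of partitions of $[0,1]$. Then for all $n\ge1$, $m\le n-1$ and $k$, $$\underline{\pi^n}\le a^n_{m,k}(1)\le|\pi^n|.$$ If moreover $\pi$ is balanced, there is a constant $C<\infty$ (depending only on $\pi$) such that for all $n\ge1$ and all distinct $(m,k),(m',k')$ with $m,m'\le n-1$ and $[t^{m,k}_1,t^{m,k}_3]\subseteq[t^{m',k'}_1,t^{m',k'}_3]$, $$|b^n_{m,k,m',k'}(1)|\le C\,(|\pi^n|-\underline{\pi^n})\sqrt{|\pi^m|/|\pi^{m'}|},$$ while $b^n_{m,k,m',k'}(1)=0$ if the supports of $e^\pi_{m,k}$ and $e^\pi_{m',k'}$ have disjoint interiors.
   Context: A partition of $[0,1]$ is a finite set $\{0=t_0<t_1<\dots<t_N=1\}$; for a partition $\pi^n=\{0=t^n_0<\dots<t^n_{N(\pi^n)}=1\}$, $N(\pi^n)$ is its number of intervals, $|\pi^n|=\max_i(t^n_{i+1}-t^n_i)$ and $\underline{\pi^n}=\min_i(t^n_{i+1}-t^n_i)$. A sequence $\pi=(\pi^n)_{n\ge0}$ of partitions of $[0,1]$, with the convention $\pi^0=\{0,1\}$, is finitely refining if $\pi^n\subseteq\pi^{n+1}$ for all $n$, $|\pi^n|\to0$, and there is $M<\infty$ such that for every $n$ each interval $[t^n_i,t^n_{i+1}]$ contains at most $M$ points of $\pi^{n+1}$. It is balanced if $\sup_{n\ge1}|\pi^n|/\underline{\pi^n}<\infty$. Haar and Schauder functions of a finitely refining $\pi$: for each level $m\ge0$ and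 each interval $[u_0,u_r]$ of $\pi^m$, let $u_0<u_1<\dots<u_r$ be the points of $\pi^{m+1}$ lying in $[u_0,u_r]$. For each $i\in\{2,\dots,r\}$ put $t_1=u_0$, $t_2=u_{i-1}$, $t_3=u_i$ and define $\psi(s)=\sqrt{\frac{t_3-t_2}{(t_2-t_1)(t_3-t_1)}}$ for $s\in[t_1,t_2)$, $\psi(s)=-\sqrt{\frac{t_2-t_1}{(t_3-t_2)(t_3-t_1)}}$ for $s\in[t_2,t_3)$, $\psi(s)=0$ otherwise, and $e(t)=\int_0^t\psi(s)\,ds$ (a continuous hat function vanishing outside $[t_1,t_3]$, affine on $[t_1,t_2]$ and on $[t_2,t_3]$, maximal at $t_2$). Ranging over all intervals of $\pi^m$ and all such $i$ gives $N(\pi^{m+1})-N(\pi^m)$ functions at level $m$, enumerated in a fixed order as $\psi_{m,k}$, $e^\pi_{m,k}$, $k=0,\dots,N(\pi^{m+1})-N(\pi^m)-1$, with associated points $t^{m,k}_1<t^{m,k}_2<t^{m,k}_3$ (so $[t^{m,k}_1,t^{m,k}_3]$ is the support of $e^\pi_{m,k}$ and $t^{m,k}_2$ its maximum point). Coefficients: for $n\ge1$, $t\in[0,1]$, let $\Delta t^n_i=t^n_{i+1}\wedge t-t^n_i\wedge t$. For $m\le n-1$ and each $k$, with $t_j=t^{m,k}_j$, let $S_1=\sum_{i:[t^n_i,t^n_{i+1}]\subseteq[t_1,t_2]}(\Delta t^n_i)^2$, $S_2=\sum_{i:[t^n_i,t^n_{i+1}]\subseteq[t_2,t_3]}(\Delta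 t^n_i)^2$ and $a^n_{m,k}(t)=\frac{1}{t_3-t_1}\Big(S_1\frac{t_3-t_2}{t_2-t_1}+S_2\frac{t_2-t_1}{t_3-t_2}\Big)$. For distinct $(m,k),(m',k')$ with $m,m'\le n-1$: if $[t^{m,k}_1,t^{m,k}_3]\subseteq[t^{m',k'}_1,t^{m',k'}_3]$, set $b^n_{m,k,m',k'}(t)=\psi_{m',k'}(t^{m,k}_1)\Big(\frac{S_1}{t_2-t_1}-\frac{S_2}{t_3-t_2}\Big)\sqrt{\frac{(t_2-t_1)(t_3-t_2)}{t_3-t_1}}$ (with $S_1,S_2,t_j$ computed for $(m,k)$) and set $b^n_{m',k',m,k}(t)=b^n_{m,k,m',k'}(t)$; if neither support contains the other, set $b^n_{m,k,m',k'}(t)=0$. (Two distinct supports are always either nested or have disjoint interiors.) *)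

theory Defs
  imports Complex_Main
begin

definition is_partition :: "real set \<Rightarrow> bool" where
  "is_partition P \<longleftrightarrow> finite P \<and> 0 \<in> P \<and> 1 \<in> P \<and> P \<subseteq> {0..1}"

definition intervals :: "real set \<Rightarrow> (real \<times> real) set" where
  "intervals P = {(a, b). a \<in> P \<and> b \<in> P \<and> a < b \<and> (\<forall>x\<in>P. x \<le> a \<or> b \<le> x)}"

definition mesh :: "real set \<Rightarrow> real" where
  "mesh P = Max ((\<lambda>(a, b). b - a) ` intervals P)"

definition minmesh :: "real set \<Rightarrow> real" where
  "minmesh P = Min ((\<lambda>(a, b). b - a) ` intervals P)"

definition finitely_refining :: "(nat \<Rightarrow> real set) \<Rightarrow> bool" where
  "finitely_refining \<pi> \<longleftrightarrow>
     (\<forall>n. is_partition (\<pi> n)) \<and> \<pi> 0 = {0, 1} \<and>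
     (\<forall>n. \<pi> n \<subseteq> \<pi> (Suc n)) \<and>
     (\<lambda>n. mesh (\<pi> n)) \<longlonglongrightarrow> 0 \<and>
     (\<exists>M::nat. \<forall>n. \<forall>(a, b) \<in> intervals (\<pi> n).
         card {x \<in> \<pi> (Suc n). a \<le> x \<and> x \<le> b} \<le> M)"

definition balanced :: "(nat \<Rightarrow> real set) \<Rightarrow> bool" where
  "balanced \<pi> \<longleftrightarrow> (\<exists>B. \<forall>n\<ge>1. mesh (\<pi> n) / minmesh (\<pi> n) \<le> B)"

(* Haar/Schauder functions at level m are indexed by their triples (t1,t2,t3):
   t1 = u_0 left endpoint of an interval [u_0,u_r] of pi^m, (t2,t3) = (u_{i-1},u_i)
   consecutive points of pi^(m+1) inside [u_0,u_r] with i >= 2 (i.e. t1 < t2). *)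
definition haar_triples :: "(nat \<Rightarrow> real set) \<Rightarrow> nat \<Rightarrow> (real \<times> real \<times> real) set" where
  "haar_triples \<pi> m = {(t1, t2, t3). \<exists>b. (t1, b) \<in> intervals (\<pi> m) \<and>
       (t2, t3) \<in> intervals (\<pi> (Suc m)) \<and> t1 < t2 \<and> t3 \<le> b}"

definition tt1 :: "real \<times> real \<times> real \<Rightarrow> real" where "tt1 \<tau> = fst \<tau>"
definition tt2 :: "real \<times> real \<times> real \<Rightarrow> real" where "tt2 \<tau> = fst (snd \<tau>)"
definition tt3 :: "real \<times> real \<times> real \<Rightarrow> real" where "tt3 \<tau> = snd (snd \<tau>)"

definition haar_psi :: "real \<times> real \<times> real \<Rightarrow> real \<Rightarrow> real" where
  "haar_psi \<tau> s =
     (if tt1 \<tau> \<le> s \<and> s < tt2 \<tau> then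
        sqrt ((tt3 \<tau> - tt2 \<tau>) / ((tt2 \<tau> - tt1 \<tau>) * (tt3 \<tau> - tt1 \<tau>)))
      else if tt2 \<tau> \<le> s \<and> s < tt3 \<tau> then
        - sqrt ((tt2 \<tau> - tt1 \<tau>) / ((tt3 \<tau> - tt2 \<tau>) * (tt3 \<tau> - tt1 \<tau>)))
      else 0)"

definition incr :: "real \<Rightarrow> real \<Rightarrow> real \<Rightarrow> real" where
  "incr t a b = min b t - min a t"

definition Ssum :: "(nat \<Rightarrow> real set) \<Rightarrow> nat \<Rightarrow> real \<Rightarrow> real \<Rightarrow> real \<Rightarrow> real" where
  "Ssum \<pi> n t l r = (\<Sum>(a, b) \<in> {(a, b) \<in> intervals (\<pi> n). l \<le> a \<and> b \<le> r}. (incr t a b)\<^sup>2)"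

definition acoef :: "(nat \<Rightarrow> real set) \<Rightarrow> nat \<Rightarrow> real \<times> real \<times> real \<Rightarrow> real \<Rightarrow> real" where
  "acoef \<pi> n \<tau> t =
     1 / (tt3 \<tau> - tt1 \<tau>) *
     (Ssum \<pi> n t (tt1 \<tau>) (tt2 \<tau>) * (tt3 \<tau> - tt2 \<tau>) / (tt2 \<tau> - tt1 \<tau>) +
      Ssum \<pi> n t (tt2 \<tau>) (tt3 \<tau>) * (tt2 \<tau> - tt1 \<tau>) / (tt3 \<tau> - tt2 \<tau>))"

definition bform :: "(nat \<Rightarrow> real set) \<Rightarrow> nat \<Rightarrow> real \<times> real \<times> real \<Rightarrow> real \<times> real \<times> real \<Rightarrow> real \<Rightarrow> real" where
  "bform \<pi> n \<tau> \<sigma> t =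
     haar_psi \<sigma> (tt1 \<tau>) *
     (Ssum \<pi> n t (tt1 \<tau>) (tt2 \<tau>) / (tt2 \<tau> - tt1 \<tau>) -
      Ssum \<pi> n t (tt2 \<tau>) (tt3 \<tau>) / (tt3 \<tau> - tt2 \<tau>)) *
     sqrt ((tt2 \<tau> - tt1 \<tau>) * (tt3 \<tau> - tt2 \<tau>) / (tt3 \<tau> - tt1 \<tau>))"

definition bcoef :: "(nat \<Rightarrow> real set) \<Rightarrow> nat \<Rightarrow> real \<times> real \<times> real \<Rightarrow> real \<times> real \<times> real \<Rightarrow> real \<Rightarrow> real" where
  "bcoef \<pi> n \<tau> \<sigma> t =
     (if {tt1 \<tau>..tt3 \<tau>} \<subseteq> {tt1 \<sigma>..tt3 \<sigma>} then bform \<pi> n \<tau> \<sigma> t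
      else if {tt1 \<sigma>..tt3 \<sigma>} \<subseteq> {tt1 \<tau>..tt3 \<tau>} then bform \<pi> n \<sigma> \<tau> t
      else 0)"

end

(* At t = 1 the increments are the interval lengths, so S_1 / (t_2 - t_1) and S_2 / (t_3 - t_2) are
   averages of the lengths of the intervals of pi^n weighted by these lengths, hence lie between
   the minimal and the maximal length. The coefficient a is a convex combination of these two
   averages, and b is psi(t_1) times their difference times sqrt((t_2-t_1)(t_3-t_2)/(t_3-t_1)),
   which is at most sqrt |pi^m|. The Haar function of a triple at level m' is bounded by
   1 / sqrt(underline(pi^(m'+1))), and for a balanced finitely refining sequence
   |pi^m'| <= M |pi^(m'+1)| <= M B underline(pi^(m'+1)); this gives C = sqrt(M B).
   Supports with disjoint interiors are not nested, so b vanishes by definition. *)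

theory Submission
  imports Defs
begin

abbreviation intervals_within :: "real set \<Rightarrow> real \<Rightarrow> real \<Rightarrow> (real \<times> real) set" where
  "intervals_within P l r \<equiv> {(a, b) \<in> intervals P. l \<le> a \<and> b \<le> r}"

lemma finite_intervals: "finite P \<Longrightarrow> finite (intervals P)"
  by (rule finite_subset[of _ "P \<times> P"]) (auto simp: intervals_def)

lemma finite_intervals_within: "finite P \<Longrightarrow> finite (intervals_within P l r)"
  by (rule finite_subset[OF _ finite_intervals]) auto

lemma intervals_within_last:
  assumes "finite P" "l \<in> P" "r \<in> P" "l < r"
  obtains r' where "r' \<in> P" "l \<le> r'" "r' < r"
    "intervals_within P l r = insert (r', r) (intervals_within P l r')"
proof -
  define A where "A = {x \<in> P. l \<le> x \<and> x < r}"
  define r' where "r' = Max A"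
  have "finite A" "l \<in> A" using assms by (auto simp: A_def)
  then have "r' \<in> A" and r'_max: "\<And>x. x \<in> A \<Longrightarrow> x \<le> r'"
    unfolding r'_def by (auto intro: Max_in)
  then have r': "r' \<in> P" "l \<le> r'" "r' < r" by (auto simp: A_def)
  have "x \<le> r' \<or> r \<le> x" if "x \<in> P" for x
    using r'_max[of x] r' that by (cases "x < l") (auto simp: A_def)
  then have last: "(r', r) \<in> intervals P"
    using r' assms by (auto simp: intervals_def)
  have last_unique: "(a, b) = (r', r)" if "(a, b) \<in> intervals_within P l r" "r' < b" for a b
  proof -
    have ab: "a \<in> P" "b \<in> P" "a < b" "\<forall>x\<in>P. x \<le> a \<or> b \<le> x" "l \<le> a" "b \<le> r"
      using that(1) by (auto simp: intervals_def)
    have "b = r"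
      using r'_max[of b] ab that(2) unfolding A_def by fastforce
    moreover have "r' \<le> a"
      using ab(4) r'(1) that(2) by auto
    moreover have "a \<le> r'"
      using r'_max[of a] ab \<open>b = r\<close> unfolding A_def by auto
    ultimately show ?thesis by simp
  qed
  have "intervals_within P l r \<subseteq> insert (r', r) (intervals_within P l r')"
  proof
    fix p assume p: "p \<in> intervals_within P l r"
    then obtain a b where [simp]: "p = (a, b)" by (cases p)
    show "p \<in> insert (r', r) (intervals_within P l r')"
      using p last_unique[of a b] by (cases "b \<le> r'") auto
  qed
  then have "intervals_within P l r = insert (r', r) (intervals_within P l r')"
    using last r' by auto
  with r' show thesis by (rule that)
qed

lemma sum_intervals_within:
  assumes "finite P" "l \<in> P" "r \<in> P" "l \<le> r"
  shows "(\<Sum>(a, b) \<in> intervals_within P l r. b - a) = r - l"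
  using assms
proof (induction "card {x \<in> P. l \<le> x \<and> x < r}" arbitrary: r rule: less_induct)
  case less
  show ?case
  proof (cases "l = r")
    case True
    then have empty: "intervals_within P l r = {}" by (auto simp: intervals_def)
    show ?thesis unfolding empty using True by simp
  next
    case False
    with less.prems(4) have "l < r" by simp
    then obtain r' where r': "r' \<in> P" "l \<le> r'" "r' < r"
      and split: "intervals_within P l r = insert (r', r) (intervals_within P l r')"
      by (rule intervals_within_last[OF less.prems(1-3)])
    have "{x \<in> P. l \<le> x \<and> x < r'} \<subset> {x \<in> P. l \<le> x \<and> x < r}" using r' by auto
    then have "card {x \<in> P. l \<le> x \<and> x < r'} < card {x \<in> P. l \<le> x \<and> x < r}"
      using less.prems(1) by (intro psubset_card_mono) auto
    then have "(\<Sum>(a, b) \<in> intervals_within P l r'. b - a) = r' - l"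
      using less.hyps less.prems(1,2) r'(1,2) by simp
    moreover have "(r', r) \<notin> intervals_within P l r'" using r' by auto
    ultimately show ?thesis
      unfolding split using finite_intervals_within[OF less.prems(1)] by simp
  qed
qed

lemma interval_length_bounds:
  assumes "is_partition P" "(a, b) \<in> intervals P"
  shows "minmesh P \<le> b - a" "b - a \<le> mesh P"
proof -
  have "finite ((\<lambda>(a, b). b - a) ` intervals P)"
    using assms(1) finite_intervals by (auto simp: is_partition_def)
  moreover have "b - a \<in> (\<lambda>(a, b). b - a) ` intervals P" using assms(2) by force
  ultimately show "minmesh P \<le> b - a" "b - a \<le> mesh P"
    unfolding minmesh_def mesh_def by simp_all
qed

lemma intervals_within_nonempty:
  assumes "is_partition P" "l \<in> P" "r \<in> P" "l < r"
  shows "intervals_within P l r \<noteq> {}"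
proof
  assume empty: "intervals_within P l r = {}"
  have "(\<Sum>(a, b) \<in> intervals_within P l r. b - a) = 0" unfolding empty by simp
  with sum_intervals_within[of P l r] assms show False by (simp add: is_partition_def)
qed

lemma minmesh_le_gap:
  assumes "is_partition P" "l \<in> P" "r \<in> P" "l < r"
  shows "minmesh P \<le> r - l"
proof -
  obtain a b where "(a, b) \<in> intervals P" "l \<le> a" "b \<le> r"
    using intervals_within_nonempty[OF assms] by auto
  then show ?thesis using interval_length_bounds(1)[OF assms(1)] by fastforce
qed

lemma minmesh_pos:
  assumes "is_partition P"
  shows "0 < minmesh P"
proof -
  have "intervals P \<noteq> {}"
    using intervals_within_nonempty[of P 0 1] assms by (auto simp: is_partition_def)
  moreover have "finite (intervals P)"
    using assms by (simp add: is_partition_def finite_intervals)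
  ultimately have "minmesh P \<in> (\<lambda>(a, b). b - a) ` intervals P"
    unfolding minmesh_def by (intro Min_in) auto
  then show ?thesis by (auto simp: intervals_def)
qed

lemma mesh_pos:
  assumes "is_partition P"
  shows "0 < mesh P"
proof -
  obtain a b where "(a, b) \<in> intervals P"
    using intervals_within_nonempty[of P 0 1] assms by (auto simp: is_partition_def)
  then show ?thesis
    using interval_length_bounds[OF assms] minmesh_pos[OF assms] by fastforce
qed

text \<open>A longest interval of \<open>P\<close> is cut by the at most \<open>M\<close> points of \<open>Q\<close> it contains into
  at most \<open>M\<close> intervals of \<open>Q\<close>.\<close>
lemma mesh_le_mesh_refinement:
  assumes P: "is_partition P" and Q: "is_partition Q" and "P \<subseteq> Q"
    and M: "\<forall>(a, b) \<in> intervals P. card {x \<in> Q. a \<le> x \<and> x \<le> b} \<le> M"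
  shows "mesh P \<le> real M * mesh Q"
proof -
  have "intervals P \<noteq> {}" "finite (intervals P)"
    using intervals_within_nonempty[of P 0 1] P by (auto simp: is_partition_def finite_intervals)
  then have "mesh P \<in> (\<lambda>(a, b). b - a) ` intervals P"
    unfolding mesh_def by (intro Max_in) auto
  then obtain a b where ab: "(a, b) \<in> intervals P" "mesh P = b - a" by auto
  have "a \<in> Q" "b \<in> Q" "a \<le> b" using ab \<open>P \<subseteq> Q\<close> by (auto simp: intervals_def)
  have finQ: "finite Q" using Q by (simp add: is_partition_def)
  let ?S = "intervals_within Q a b"
  have "inj_on fst ?S"
  proof (rule inj_onI)
    fix p q assume "p \<in> ?S" "q \<in> ?S" "fst p = fst q"
    then obtain c d d' where "p = (c, d)" "q = (c, d')" "(c, d) \<in> intervals Q" "(c, d') \<in> intervals Q"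
      by (cases p, cases q) auto
    then show "p = q" unfolding intervals_def by force
  qed
  then have "card ?S = card (fst ` ?S)" by (rule card_image[symmetric])
  also have "\<dots> \<le> card {x \<in> Q. a \<le> x \<and> x \<le> b}"
    using finQ by (intro card_mono) (auto simp: intervals_def)
  also have "\<dots> \<le> M" using M ab(1) by auto
  finally have card: "real (card ?S) \<le> real M" by simp
  have "mesh P = (\<Sum>(c, d) \<in> ?S. d - c)"
    using sum_intervals_within[OF finQ \<open>a \<in> Q\<close> \<open>b \<in> Q\<close> \<open>a \<le> b\<close>] ab(2) by simp
  also have "\<dots> \<le> (\<Sum>(c, d) \<in> ?S. mesh Q)"
    by (rule sum_mono) (use interval_length_bounds(2)[OF Q] in auto)
  also have "\<dots> = real (card ?S) * mesh Q" by (simp add: case_prod_unfold)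
  also have "\<dots> \<le> real M * mesh Q"
    using card mesh_pos[OF Q] by (intro mult_right_mono) auto
  finally show ?thesis .
qed

lemma Ssum_at_1:
  assumes "is_partition (\<pi> n)"
  shows "Ssum \<pi> n 1 l r = (\<Sum>(a, b) \<in> intervals_within (\<pi> n) l r. (b - a)\<^sup>2)"
  unfolding Ssum_def
proof (rule sum.cong[OF refl], clarify)
  fix a b assume "(a, b) \<in> intervals (\<pi> n)"
  then have "a \<le> 1" "b \<le> 1" using assms by (auto simp: intervals_def is_partition_def)
  then show "(incr 1 a b)\<^sup>2 = (b - a)\<^sup>2" by (simp add: incr_def)
qed

text \<open>\<open>Ssum\<close> is a weighted mean of the interval lengths, the weights being these lengths.\<close>
lemma Ssum_mean_bounds:
  assumes P: "is_partition (\<pi> n)" and "l \<in> \<pi> n" "r \<in> \<pi> n" "l < r"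
  shows "minmesh (\<pi> n) \<le> Ssum \<pi> n 1 l r / (r - l)" "Ssum \<pi> n 1 l r / (r - l) \<le> mesh (\<pi> n)"
proof -
  let ?S = "intervals_within (\<pi> n) l r"
  have weights: "(\<Sum>(a, b) \<in> ?S. c * (b - a)) = c * (r - l)" for c
    using sum_intervals_within[of "\<pi> n" l r] assms
    by (simp add: is_partition_def sum_distrib_left[symmetric] case_prod_unfold)
  have len: "minmesh (\<pi> n) \<le> b - a" "b - a \<le> mesh (\<pi> n)" "0 < b - a"
    if "(a, b) \<in> ?S" for a b
    using that interval_length_bounds[OF P, of a b] by (auto simp: intervals_def)
  have "(\<Sum>(a, b) \<in> ?S. minmesh (\<pi> n) * (b - a)) \<le> (\<Sum>(a, b) \<in> ?S. (b - a)\<^sup>2)"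
    by (rule sum_mono) (use len in \<open>auto simp: power2_eq_square\<close>)
  moreover have "(\<Sum>(a, b) \<in> ?S. (b - a)\<^sup>2) \<le> (\<Sum>(a, b) \<in> ?S. mesh (\<pi> n) * (b - a))"
    by (rule sum_mono) (use len in \<open>auto simp: power2_eq_square\<close>)
  ultimately show "minmesh (\<pi> n) \<le> Ssum \<pi> n 1 l r / (r - l)"
    "Ssum \<pi> n 1 l r / (r - l) \<le> mesh (\<pi> n)"
    using \<open>l < r\<close> by (simp_all add: Ssum_at_1[of \<pi> n, OF P] weights pos_le_divide_eq pos_divide_le_eq)
qed

lemma haar_triplesE:
  assumes "\<tau> \<in> haar_triples \<pi> m"
  obtains b where "(tt1 \<tau>, b) \<in> intervals (\<pi> m)" "(tt2 \<tau>, tt3 \<tau>) \<in> intervals (\<pi> (Suc m))"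
    "tt1 \<tau> < tt2 \<tau>" "tt3 \<tau> \<le> b"
  using assms by (cases \<tau>) (auto simp: haar_triples_def tt1_def tt2_def tt3_def)

lemma haar_triple_points:
  assumes "\<tau> \<in> haar_triples \<pi> m" "\<pi> m \<subseteq> P" "\<pi> (Suc m) \<subseteq> P"
  shows "tt1 \<tau> \<in> P" "tt2 \<tau> \<in> P" "tt3 \<tau> \<in> P" "tt1 \<tau> < tt2 \<tau>" "tt2 \<tau> < tt3 \<tau>"
proof -
  obtain b where "(tt1 \<tau>, b) \<in> intervals (\<pi> m)" "(tt2 \<tau>, tt3 \<tau>) \<in> intervals (\<pi> (Suc m))"
    "tt1 \<tau> < tt2 \<tau>"
    using assms(1) by (rule haar_triplesE)
  with assms(2,3) show "tt1 \<tau> \<in> P" "tt2 \<tau> \<in> P" "tt3 \<tau> \<in> P" "tt1 \<tau> < tt2 \<tau>" "tt2 \<tau> < tt3 \<tau>"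
    by (auto simp: intervals_def)
qed

lemma haar_triple_left_gap_le_mesh:
  assumes "\<tau> \<in> haar_triples \<pi> m" "is_partition (\<pi> m)"
  shows "tt2 \<tau> - tt1 \<tau> \<le> mesh (\<pi> m)"
proof -
  obtain b where b: "(tt1 \<tau>, b) \<in> intervals (\<pi> m)" "tt3 \<tau> \<le> b"
    and "(tt2 \<tau>, tt3 \<tau>) \<in> intervals (\<pi> (Suc m))"
    using assms(1) by (rule haar_triplesE)
  then have "tt2 \<tau> < tt3 \<tau>" by (simp add: intervals_def)
  with b interval_length_bounds(2)[OF assms(2) b(1)] show ?thesis by linarith
qed

lemma haar_triple_gaps_ge_minmesh:
  assumes "\<tau> \<in> haar_triples \<pi> m" "is_partition (\<pi> (Suc m))" "\<pi> m \<subseteq> \<pi> (Suc m)"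
  shows "minmesh (\<pi> (Suc m)) \<le> tt2 \<tau> - tt1 \<tau>" "minmesh (\<pi> (Suc m)) \<le> tt3 \<tau> - tt2 \<tau>"
proof -
  obtain b where "(tt1 \<tau>, b) \<in> intervals (\<pi> m)" and mid: "(tt2 \<tau>, tt3 \<tau>) \<in> intervals (\<pi> (Suc m))"
    and "tt1 \<tau> < tt2 \<tau>"
    using assms(1) by (rule haar_triplesE)
  with assms(3) have "tt1 \<tau> \<in> \<pi> (Suc m)" "tt2 \<tau> \<in> \<pi> (Suc m)" by (auto simp: intervals_def)
  then show "minmesh (\<pi> (Suc m)) \<le> tt2 \<tau> - tt1 \<tau>"
    using minmesh_le_gap[OF assms(2)] \<open>tt1 \<tau> < tt2 \<tau>\<close> by blast
  show "minmesh (\<pi> (Suc m)) \<le> tt3 \<tau> - tt2 \<tau>" by (rule interval_length_bounds(1)[OF assms(2) mid])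
qed

lemma weighted_mean_bounds:
  fixes lo hi d1 d2 u1 u2 :: real
  assumes "0 < d1" "0 < d2" "lo \<le> u1" "u1 \<le> hi" "lo \<le> u2" "u2 \<le> hi"
  shows "lo \<le> (u1 * d2 + u2 * d1) / (d1 + d2)" "(u1 * d2 + u2 * d1) / (d1 + d2) \<le> hi"
proof -
  have "lo * d2 \<le> u1 * d2" "lo * d1 \<le> u2 * d1" "u1 * d2 \<le> hi * d2" "u2 * d1 \<le> hi * d1"
    using assms by (simp_all add: mult_right_mono)
  then have "lo * (d1 + d2) \<le> u1 * d2 + u2 * d1" "u1 * d2 + u2 * d1 \<le> hi * (d1 + d2)"
    by (simp_all add: algebra_simps)
  then show "lo \<le> (u1 * d2 + u2 * d1) / (d1 + d2)" "(u1 * d2 + u2 * d1) / (d1 + d2) \<le> hi"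
    using assms(1,2) by (simp_all add: pos_le_divide_eq pos_divide_le_eq)
qed

text \<open>\<open>acoef\<close> is the mean of the two averages \<open>S\<^sub>1/(t\<^sub>2-t\<^sub>1)\<close> and \<open>S\<^sub>2/(t\<^sub>3-t\<^sub>2)\<close>,
  weighted by \<open>t\<^sub>3-t\<^sub>2\<close> and \<open>t\<^sub>2-t\<^sub>1\<close>.\<close>
lemma acoef_bounds:
  assumes P: "is_partition (\<pi> n)" and "tt1 \<tau> \<in> \<pi> n" "tt2 \<tau> \<in> \<pi> n" "tt3 \<tau> \<in> \<pi> n"
    and "tt1 \<tau> < tt2 \<tau>" "tt2 \<tau> < tt3 \<tau>"
  shows "minmesh (\<pi> n) \<le> acoef \<pi> n \<tau> 1" "acoef \<pi> n \<tau> 1 \<le> mesh (\<pi> n)"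
proof -
  define d1 d2 where "d1 = tt2 \<tau> - tt1 \<tau>" and "d2 = tt3 \<tau> - tt2 \<tau>"
  define u1 u2 where "u1 = Ssum \<pi> n 1 (tt1 \<tau>) (tt2 \<tau>) / d1"
    and "u2 = Ssum \<pi> n 1 (tt2 \<tau>) (tt3 \<tau>) / d2"
  have d: "0 < d1" "0 < d2" using assms by (simp_all add: d1_def d2_def)
  have "acoef \<pi> n \<tau> 1 = (u1 * d2 + u2 * d1) / (d1 + d2)"
    using d unfolding acoef_def u1_def u2_def by (simp add: d1_def d2_def field_simps)
  moreover have "minmesh (\<pi> n) \<le> u1" "u1 \<le> mesh (\<pi> n)" "minmesh (\<pi> n) \<le> u2" "u2 \<le> mesh (\<pi> n)"
    using Ssum_mean_bounds[of \<pi> n, OF P] assms by (simp_all add: u1_def u2_def d1_def d2_def)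
  ultimately show "minmesh (\<pi> n) \<le> acoef \<pi> n \<tau> 1" "acoef \<pi> n \<tau> 1 \<le> mesh (\<pi> n)"
    using weighted_mean_bounds[OF d] by simp_all
qed

lemma bcoef_eq_0_if_interiors_disjoint:
  assumes "tt1 \<tau> < tt3 \<tau>" "tt1 \<sigma> < tt3 \<sigma>"
    and "{tt1 \<tau><..<tt3 \<tau>} \<inter> {tt1 \<sigma><..<tt3 \<sigma>} = {}"
  shows "bcoef \<pi> n \<tau> \<sigma> t = 0"
proof -
  have not_nested: "\<not> {tt1 x..tt3 x} \<subseteq> {tt1 y..tt3 y}"
    if "tt1 x < tt3 x" "{tt1 x<..<tt3 x} \<inter> {tt1 y<..<tt3 y} = {}" for x y :: "real \<times> real \<times> real"
  proof
    assume "{tt1 x..tt3 x} \<subseteq> {tt1 y..tt3 y}"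
    then have "(tt1 x + tt3 x) / 2 \<in> {tt1 x<..<tt3 x} \<inter> {tt1 y<..<tt3 y}"
      using that(1) by auto
    with that(2) show False by blast
  qed
  have "{tt1 \<sigma><..<tt3 \<sigma>} \<inter> {tt1 \<tau><..<tt3 \<tau>} = {}" using assms(3) by blast
  with assms(2) have "\<not> {tt1 \<sigma>..tt3 \<sigma>} \<subseteq> {tt1 \<tau>..tt3 \<tau>}" by (rule not_nested)
  moreover have "\<not> {tt1 \<tau>..tt3 \<tau>} \<subseteq> {tt1 \<sigma>..tt3 \<sigma>}" using assms(1,3) by (rule not_nested)
  ultimately show ?thesis unfolding bcoef_def by (simp only: if_False)
qed

lemma abs_haar_psi_le:
  assumes "0 < \<delta>" "\<delta> \<le> tt2 \<sigma> - tt1 \<sigma>" "\<delta> \<le> tt3 \<sigma> - tt2 \<sigma>"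
  shows "\<bar>haar_psi \<sigma> s\<bar> \<le> sqrt (1 / \<delta>)"
proof -
  define d1 d2 where "d1 = tt2 \<sigma> - tt1 \<sigma>" and "d2 = tt3 \<sigma> - tt2 \<sigma>"
  have d: "0 < d1" "0 < d2" "\<delta> \<le> d1" "\<delta> \<le> d2" using assms by (simp_all add: d1_def d2_def)
  have "d2 \<le> 1 / d1 * (d1 * (d1 + d2))" "d1 \<le> 1 / d2 * (d2 * (d1 + d2))"
    using d by simp_all
  then have "d2 / (d1 * (d1 + d2)) \<le> 1 / d1" "d1 / (d2 * (d1 + d2)) \<le> 1 / d2"
    using d by (simp_all add: pos_divide_le_eq)
  moreover have "1 / d1 \<le> 1 / \<delta>" "1 / d2 \<le> 1 / \<delta>"
    using d assms(1) by (simp_all add: frac_le)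
  ultimately have "sqrt (d2 / (d1 * (d1 + d2))) \<le> sqrt (1 / \<delta>)"
    "sqrt (d1 / (d2 * (d1 + d2))) \<le> sqrt (1 / \<delta>)"
    by (simp_all only: real_sqrt_le_iff)
  moreover have "tt3 \<sigma> - tt1 \<sigma> = d1 + d2" by (simp add: d1_def d2_def)
  ultimately show ?thesis
    unfolding haar_psi_def d1_def[symmetric] d2_def[symmetric] using d assms(1) by auto
qed

lemma abs_bcoef_le:
  assumes P: "is_partition (\<pi> n)" and "tt1 \<tau> \<in> \<pi> n" "tt2 \<tau> \<in> \<pi> n" "tt3 \<tau> \<in> \<pi> n"
    and "tt1 \<tau> < tt2 \<tau>" "tt2 \<tau> < tt3 \<tau>" and "{tt1 \<tau>..tt3 \<tau>} \<subseteq> {tt1 \<sigma>..tt3 \<sigma>}"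
  shows "\<bar>bcoef \<pi> n \<tau> \<sigma> 1\<bar>
    \<le> \<bar>haar_psi \<sigma> (tt1 \<tau>)\<bar> * (mesh (\<pi> n) - minmesh (\<pi> n)) * sqrt (tt2 \<tau> - tt1 \<tau>)"
proof -
  define d1 d2 where "d1 = tt2 \<tau> - tt1 \<tau>" and "d2 = tt3 \<tau> - tt2 \<tau>"
  define u1 u2 where "u1 = Ssum \<pi> n 1 (tt1 \<tau>) (tt2 \<tau>) / d1"
    and "u2 = Ssum \<pi> n 1 (tt2 \<tau>) (tt3 \<tau>) / d2"
  have d: "0 < d1" "0 < d2" using assms by (simp_all add: d1_def d2_def)
  have u: "minmesh (\<pi> n) \<le> u1" "u1 \<le> mesh (\<pi> n)" "minmesh (\<pi> n) \<le> u2" "u2 \<le> mesh (\<pi> n)"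
    using Ssum_mean_bounds[of \<pi> n, OF P] assms by (simp_all add: u1_def u2_def d1_def d2_def)
  have "bcoef \<pi> n \<tau> \<sigma> 1 = haar_psi \<sigma> (tt1 \<tau>) * (u1 - u2) * sqrt (d1 * d2 / (d1 + d2))"
    using assms(7) unfolding bcoef_def bform_def u1_def u2_def by (simp add: d1_def d2_def)
  also have "\<bar>\<dots>\<bar> = \<bar>haar_psi \<sigma> (tt1 \<tau>)\<bar> * \<bar>u1 - u2\<bar> * sqrt (d1 * d2 / (d1 + d2))"
    using d by (simp add: abs_mult)
  also have "\<dots> \<le> \<bar>haar_psi \<sigma> (tt1 \<tau>)\<bar> * (mesh (\<pi> n) - minmesh (\<pi> n)) * sqrt d1"
  proof (intro mult_mono mult_left_mono)
    show "\<bar>u1 - u2\<bar> \<le> mesh (\<pi> n) - minmesh (\<pi> n)" using u by linarith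
    show "sqrt (d1 * d2 / (d1 + d2)) \<le> sqrt d1"
      using d by (simp add: field_simps)
  qed (use d u in auto)
  finally show ?thesis by (simp add: d1_def)
qed

lemma finitely_refining_partition: "finitely_refining \<pi> \<Longrightarrow> is_partition (\<pi> n)"
  by (simp add: finitely_refining_def)

lemma finitely_refining_mono:
  assumes "finitely_refining \<pi>" "m \<le> n"
  shows "\<pi> m \<subseteq> \<pi> n"
proof -
  have "\<And>k. \<pi> k \<subseteq> \<pi> (Suc k)" using assms(1) by (simp add: finitely_refining_def)
  then show ?thesis using assms(2) by (rule lift_Suc_mono_le)
qed

lemma finitely_refining_haar_triple_points:
  assumes "finitely_refining \<pi>" "\<tau> \<in> haar_triples \<pi> m" "m < n"
  shows "tt1 \<tau> \<in> \<pi> n" "tt2 \<tau> \<in> \<pi> n" "tt3 \<tau> \<in> \<pi> n" "tt1 \<tau> < tt2 \<tau>" "tt2 \<tau> < tt3 \<tau>"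
proof -
  have "\<pi> m \<subseteq> \<pi> n" "\<pi> (Suc m) \<subseteq> \<pi> n"
    using finitely_refining_mono[OF assms(1)] assms(3) by simp_all
  then show "tt1 \<tau> \<in> \<pi> n" "tt2 \<tau> \<in> \<pi> n" "tt3 \<tau> \<in> \<pi> n" "tt1 \<tau> < tt2 \<tau>" "tt2 \<tau> < tt3 \<tau>"
    by (rule haar_triple_points[OF assms(2)])+
qed

lemma balanced_mesh_le_minmesh_Suc:
  assumes fr: "finitely_refining \<pi>" and "balanced \<pi>"
  obtains K where "\<And>m. mesh (\<pi> m) \<le> K * minmesh (\<pi> (Suc m))"
proof -
  note part = finitely_refining_partition[OF fr]
  obtain M :: nat where M: "\<And>n. \<forall>(a, b) \<in> intervals (\<pi> n). card {x \<in> \<pi> (Suc n). a \<le> x \<and> x \<le> b} \<le> M"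
    using fr by (auto simp: finitely_refining_def)
  obtain B where B: "\<And>n. 1 \<le> n \<Longrightarrow> mesh (\<pi> n) / minmesh (\<pi> n) \<le> B"
    using \<open>balanced \<pi>\<close> by (auto simp: balanced_def)
  have "mesh (\<pi> m) \<le> (real M * B) * minmesh (\<pi> (Suc m))" for m
  proof -
    have "\<pi> m \<subseteq> \<pi> (Suc m)" using fr by (rule finitely_refining_mono) simp
    then have "mesh (\<pi> m) \<le> real M * mesh (\<pi> (Suc m))"
      by (rule mesh_le_mesh_refinement[OF part part _ M])
    moreover have "mesh (\<pi> (Suc m)) \<le> B * minmesh (\<pi> (Suc m))"
      using B[of "Suc m"] minmesh_pos[OF part] by (simp add: pos_divide_le_eq)
    ultimately show ?thesis
      by (metis mult.assoc mult_left_mono of_nat_0_le_iff order_trans)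
  qed
  then show thesis by (rule that)
qed

lemma abs_bcoef_le_balanced:
  assumes fr: "finitely_refining \<pi>" and K: "\<And>m. mesh (\<pi> m) \<le> K * minmesh (\<pi> (Suc m))"
    and "\<tau> \<in> haar_triples \<pi> m" "\<sigma> \<in> haar_triples \<pi> m'" "m < n"
    and "{tt1 \<tau>..tt3 \<tau>} \<subseteq> {tt1 \<sigma>..tt3 \<sigma>}"
  shows "\<bar>bcoef \<pi> n \<tau> \<sigma> 1\<bar> \<le> sqrt K * (mesh (\<pi> n) - minmesh (\<pi> n)) * sqrt (mesh (\<pi> m) / mesh (\<pi> m'))"
proof -
  note part = finitely_refining_partition[OF fr]
  let ?\<delta> = "minmesh (\<pi> (Suc m'))" and ?D = "mesh (\<pi> n) - minmesh (\<pi> n)"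
  note \<tau> = finitely_refining_haar_triple_points[OF fr assms(3,5)]
  have "?\<delta> \<le> tt2 \<sigma> - tt1 \<sigma>" "?\<delta> \<le> tt3 \<sigma> - tt2 \<sigma>"
    using haar_triple_gaps_ge_minmesh[OF assms(4) part] fr finitely_refining_mono by auto
  then have psi: "\<bar>haar_psi \<sigma> (tt1 \<tau>)\<bar> \<le> sqrt (1 / ?\<delta>)"
    by (intro abs_haar_psi_le minmesh_pos part)
  have "0 \<le> ?D" using acoef_bounds[of \<pi> n, OF part \<tau>] by linarith
  have "0 < K * ?\<delta>" using K[of m'] mesh_pos[OF part, of m'] by linarith
  then have "0 < K" using minmesh_pos[OF part] by (rule zero_less_mult_pos2)
  have "1 / ?\<delta> * (tt2 \<tau> - tt1 \<tau>) \<le> K / mesh (\<pi> m') * mesh (\<pi> m)"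
  proof (rule mult_mono)
    show "1 / ?\<delta> \<le> K / mesh (\<pi> m')"
      using K[of m'] mesh_pos[OF part] minmesh_pos[OF part] by (simp add: field_simps)
    show "tt2 \<tau> - tt1 \<tau> \<le> mesh (\<pi> m)"
      using haar_triple_left_gap_le_mesh[OF assms(3) part] .
  qed (use \<open>0 < K\<close> mesh_pos[OF part] \<tau> in \<open>auto intro!: divide_nonneg_pos\<close>)
  then have scale: "sqrt (1 / ?\<delta>) * sqrt (tt2 \<tau> - tt1 \<tau>) \<le> sqrt K * sqrt (mesh (\<pi> m) / mesh (\<pi> m'))"
    by (simp add: real_sqrt_mult[symmetric])
  have "\<bar>bcoef \<pi> n \<tau> \<sigma> 1\<bar> \<le> \<bar>haar_psi \<sigma> (tt1 \<tau>)\<bar> * ?D * sqrt (tt2 \<tau> - tt1 \<tau>)"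
    using abs_bcoef_le[of \<pi> n, OF part \<tau> assms(6)] .
  also have "\<dots> \<le> sqrt (1 / ?\<delta>) * ?D * sqrt (tt2 \<tau> - tt1 \<tau>)"
    using psi \<open>0 \<le> ?D\<close> \<tau>(4) by (intro mult_right_mono) auto
  also have "\<dots> = ?D * (sqrt (1 / ?\<delta>) * sqrt (tt2 \<tau> - tt1 \<tau>))" by simp
  also have "\<dots> \<le> ?D * (sqrt K * sqrt (mesh (\<pi> m) / mesh (\<pi> m')))"
    using scale \<open>0 \<le> ?D\<close> by (rule mult_left_mono)
  finally show ?thesis by (simp add: mult_ac)
qed

theorem mainTheorem6:
  fixes \<pi> :: "nat \<Rightarrow> real set"
  assumes "finitely_refining \<pi>"
  shows "(\<forall>n m \<tau>. 1 \<le> n \<and> m < n \<and> \<tau> \<in> haar_triples \<pi> m \<longrightarrow>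
            minmesh (\<pi> n) \<le> acoef \<pi> n \<tau> 1 \<and> acoef \<pi> n \<tau> 1 \<le> mesh (\<pi> n))
       \<and> (\<forall>n m m' \<tau> \<sigma>. 1 \<le> n \<and> m < n \<and> m' < n \<and> \<tau> \<in> haar_triples \<pi> m \<and>
            \<sigma> \<in> haar_triples \<pi> m' \<and> (m, \<tau>) \<noteq> (m', \<sigma>) \<and>
            {tt1 \<tau><..<tt3 \<tau>} \<inter> {tt1 \<sigma><..<tt3 \<sigma>} = {} \<longrightarrow>
            bcoef \<pi> n \<tau> \<sigma> 1 = 0)
       \<and> (balanced \<pi> \<longrightarrow>
           (\<exists>C::real. \<forall>n m m' \<tau> \<sigma>. 1 \<le> n \<and> m < n \<and> m' < n \<and> \<tau> \<in> haar_triples \<pi> m \<and>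
              \<sigma> \<in> haar_triples \<pi> m' \<and> (m, \<tau>) \<noteq> (m', \<sigma>) \<and>
              {tt1 \<tau>..tt3 \<tau>} \<subseteq> {tt1 \<sigma>..tt3 \<sigma>} \<longrightarrow>
              \<bar>bcoef \<pi> n \<tau> \<sigma> 1\<bar> \<le>
                C * (mesh (\<pi> n) - minmesh (\<pi> n)) * sqrt (mesh (\<pi> m) / mesh (\<pi> m'))))"
proof (intro conjI allI impI; (elim conjE)?)
  note points = finitely_refining_haar_triple_points[OF assms]
  note part = finitely_refining_partition[OF assms]
  {
    fix n m \<tau> assume "m < n" "\<tau> \<in> haar_triples \<pi> m"
    then show "minmesh (\<pi> n) \<le> acoef \<pi> n \<tau> 1" "acoef \<pi> n \<tau> 1 \<le> mesh (\<pi> n)"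
      using acoef_bounds[of \<pi> n, OF part points[of \<tau> m n]] by simp_all
  next
    fix n m m' \<tau> \<sigma> assume "m < n" "m' < n" "\<tau> \<in> haar_triples \<pi> m" "\<sigma> \<in> haar_triples \<pi> m'"
      "{tt1 \<tau><..<tt3 \<tau>} \<inter> {tt1 \<sigma><..<tt3 \<sigma>} = {}"
    then show "bcoef \<pi> n \<tau> \<sigma> 1 = 0"
      using points[of \<tau> m n] points[of \<sigma> m' n] by (intro bcoef_eq_0_if_interiors_disjoint) auto
  }
next
  assume "balanced \<pi>"
  then obtain K where K: "\<And>m. mesh (\<pi> m) \<le> K * minmesh (\<pi> (Suc m))"
    using balanced_mesh_le_minmesh_Suc[OF assms] by metis
  show "\<exists>C. \<forall>n m m' \<tau> \<sigma>. 1 \<le> n \<and> m < n \<and> m' < n \<and> \<tau> \<in> haar_triples \<pi> m \<and>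
      \<sigma> \<in> haar_triples \<pi> m' \<and> (m, \<tau>) \<noteq> (m', \<sigma>) \<and> {tt1 \<tau>..tt3 \<tau>} \<subseteq> {tt1 \<sigma>..tt3 \<sigma>} \<longrightarrow>
      \<bar>bcoef \<pi> n \<tau> \<sigma> 1\<bar> \<le> C * (mesh (\<pi> n) - minmesh (\<pi> n)) * sqrt (mesh (\<pi> m) / mesh (\<pi> m'))"
    by (intro exI[of _ "sqrt K"] allI impI, elim conjE)
      (rule abs_bcoef_le_balanced[OF assms K]; assumption)
qed

end
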